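(* Suppose Assumptions 1 and 2 hold. Let $\varpi^*=\mathrm{col}(\Lambda^*,\mathbf z^*,x^* )\in\mathbb R^{Nm}\times\mathbb R^{Mm}\times\mathbb R^n$ satisfy $\mathbf 0\in(\mathfrak A+\mathfrak B)(\varpi^* )$. Then there is $\lambda^*\in\mathbb R^m$ with $\Lambda^*=\mathbf 1_N\otimes\lambda^*$, the pair $(x^*,\lambda^* )$ satisfies the KKT system $$\mathbf 0\in\nabla_{x_i}f_i(x_i^*,x_{-i}^* )+A_i^T\lambda^*+N_{\Omega_i}(x_i^* )\ \ (\forall i\in\{1,\dots,N\}),\qquad \sum_{i=1}^N A_ix_i^*=\sum_{i=1}^N b_i,$$ and $x^*$ is a variational GNE of the game.
   Context: Game: players $i\in\{1,\dots,N\}$ choose $x_i\in\Omega_i\subseteq\mathbb R^{n_i}$; $n=\sum_i n_i$, $x=\mathrm{col}(x_1,\dots,x_N)$, $x_{-i}$ the stack of all $x_j$, $j\neq i$, $\Omega=\prod_i\Omega_i$. Player $i$ has cost $f_i(x_i,x_{-i})$ and private data $A_i\in\mathbb R^{m\times n_i}$, $b_i\in\mathbb R^m$. Shared set $X=\Omega\cap\{x:\sum_iA_ix_i=\sum_ib_i\}$. Pseudo-gradient $F(x)=\mathrm{col}(\nabla_{x_1}f_1(x),\dots,\nabla_{x_N}f_N(x))$. A variational GNE is an $x^*\in X$ with $\langle F(x^* ),x-x^*\rangle\ge0$ for all $x\in X$. Assumption 1: each $\Omega_i$ is closed convex with nonempty interior; $X$ has nonempty relative interior; for every $x_{-i}\in\prod_{j\ne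 i}\Omega_j$ the set $\{x_i\in\Omega_i:(x_i,x_{-i})\in X\}$ has nonempty relative interior; each $f_i$ is continuously differentiable and convex in $x_i$ for fixed $x_{-i}$. Assumption 2: $F$ is $\upsilon$-strongly monotone on $\Omega$ ($\langle F(x)-F(y),x-y\rangle\ge\upsilon\|x-y\|^2$) and $\chi$-Lipschitz on $\Omega$. Graph: $\mathcal G$ is a connected undirected graph on the $N$ players with $M$ edges $e_1,\dots,e_M$, each given an arbitrary orientation. Incidence matrix $V\in\mathbb R^{N\times M}$: $V_{il}=1$ if $e_l$ points to $i$, $V_{il}=-1$ if $e_l$ starts at $i$, $0$ otherwise. $\mathbf V=V\otimes I_m$, $\mathbf A=\mathrm{diag}(A_1,\dots,A_N)\in\mathbb R^{Nm\times n}$, $\mathbf b=\mathrm{col}(b_1,\dots,b_N)$. Operators on $\varpi=\mathrm{col}(\Lambda,\mathbf z,x)$, $\Lambda=\mathrm{col}(\lambda_1,\dots,\lambda_N)\in\mathbb R^{Nm}$, $\mathbf z\in\mathbb R^{Mm}$, $x\in\mathbb R^n$: $\mathfrak A(\varpi)=\mathrm{col}\big(-\mathbf Ax-\mathbf V\mathbf z,\ \mathbf V^T\Lambda,\ \mathbf A^T\Lambda+N_\Omega(x)\big)$ (set-valued, $N_\Omega$ the normal cone of $\Omega$), $\mathfrak B(\varpi)=\mathrm{col}(\mathbf b,\mathbf 0,F(x))$. *)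

theory Defs
  imports "HOL-Analysis.Analysis"
begin

text \<open>Players form a finite type 'p (N = CARD('p)); the stacked decision
vector x lives in real^'n (n = CARD('n)); each coordinate k belongs to player blk k,
so x_i is the block of coordinates of player i, identified with the subspace
block_space blk i of real^'n.
Edges: a set E of ordered pairs (s,t), the orientation of the edge is from s to t.\<close>

definition block_space :: "('n::finite \<Rightarrow> 'p) \<Rightarrow> 'p \<Rightarrow> (real^'n) set" where
  "block_space blk i = {y. \<forall>k. blk k \<noteq> i \<longrightarrow> y $ k = 0}"

definition blk_proj :: "('n::finite \<Rightarrow> 'p) \<Rightarrow> 'p \<Rightarrow> real^'n \<Rightarrow> real^'n" where
  "blk_proj blk i x = (\<chi> k. if blk k = i then x $ k else 0)"

definition normal_cone :: "'a::real_inner set \<Rightarrow> 'a \<Rightarrow> 'a set" where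
  "normal_cone S x = (if x \<in> S then {v. \<forall>y\<in>S. inner v (y - x) \<le> 0} else {})"

definition Omega_set :: "('n::finite \<Rightarrow> 'p) \<Rightarrow> ('p \<Rightarrow> (real^'n) set) \<Rightarrow> (real^'n) set" where
  "Omega_set blk \<Omega> = {x. \<forall>i. blk_proj blk i x \<in> \<Omega> i}"

definition X_set :: "('n::finite \<Rightarrow> 'p::finite) \<Rightarrow> ('p \<Rightarrow> (real^'n) set)
     \<Rightarrow> ('p \<Rightarrow> real^'n^'m) \<Rightarrow> ('p \<Rightarrow> real^'m::finite) \<Rightarrow> (real^'n) set" where
  "X_set blk \<Omega> A b = Omega_set blk \<Omega> \<inter> {x. (\<Sum>i\<in>UNIV. A i *v x) = (\<Sum>i\<in>UNIV. b i)}"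

definition pseudo_gradient :: "('n::finite \<Rightarrow> 'p) \<Rightarrow> ('p \<Rightarrow> real^'n \<Rightarrow> real) \<Rightarrow> real^'n \<Rightarrow> real^'n" where
  "pseudo_gradient blk f x = (\<chi> k. frechet_derivative (f (blk k)) (at x) (axis k 1))"

definition incid_mult :: "('p \<times> 'p) set \<Rightarrow> ('p \<times> 'p \<Rightarrow> real^'m) \<Rightarrow> 'p \<Rightarrow> real^'m" where
  "incid_mult E z i = (\<Sum>e\<in>{e\<in>E. snd e = i}. z e) - (\<Sum>e\<in>{e\<in>E. fst e = i}. z e)"

definition incid_transp :: "('p \<Rightarrow> real^'m) \<Rightarrow> 'p \<times> 'p \<Rightarrow> real^'m" where
  "incid_transp \<Lambda> e = \<Lambda> (snd e) - \<Lambda> (fst e)"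

definition opA :: "('n::finite \<Rightarrow> 'p::finite) \<Rightarrow> ('p \<Rightarrow> (real^'n) set) \<Rightarrow> ('p \<Rightarrow> real^'n^'m::finite)
   \<Rightarrow> ('p \<times> 'p) set \<Rightarrow> ('p \<Rightarrow> real^'m) \<times> ('p \<times> 'p \<Rightarrow> real^'m) \<times> (real^'n)
   \<Rightarrow> (('p \<Rightarrow> real^'m) \<times> ('p \<times> 'p \<Rightarrow> real^'m) \<times> (real^'n)) set" where
  "opA blk \<Omega> A E w = (case w of (\<Lambda>, z, x) \<Rightarrow>
     {((\<lambda>i. - (A i *v x) - incid_mult E z i),
       incid_transp \<Lambda>,
       (\<Sum>i\<in>UNIV. transpose (A i) *v \<Lambda> i) + v) | v. v \<in> normal_cone (Omega_set blk \<Omega>) x})"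

definition opB :: "('p \<Rightarrow> real^'m) \<Rightarrow> (real^'n \<Rightarrow> real^'n)
   \<Rightarrow> ('p \<Rightarrow> real^'m) \<times> ('p \<times> 'p \<Rightarrow> real^'m) \<times> (real^'n)
   \<Rightarrow> ('p \<Rightarrow> real^'m) \<times> ('p \<times> 'p \<Rightarrow> real^'m) \<times> (real^'n)" where
  "opB b F w = (case w of (\<Lambda>, z, x) \<Rightarrow> (b, (\<lambda>e. 0), F x))"

text \<open>0 \<in> (frak A + frak B)(w); the edge component is an element of R^{Mm}, i.e. only
its values on the edges in E are coordinates.\<close>
definition zero_in_A_plus_B where
  "zero_in_A_plus_B blk \<Omega> A b E F w \<longleftrightarrow>
     (\<exists>(a1, a2, a3) \<in> opA blk \<Omega> A E w.
        (case opB b F w of (b1, b2, b3) \<Rightarrow>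
          (\<forall>i. a1 i + b1 i = 0) \<and> (\<forall>e\<in>E. a2 e + b2 e = 0) \<and> a3 + b3 = 0))"

definition is_vGNE :: "(real^'n \<Rightarrow> real^'n) \<Rightarrow> (real^'n) set \<Rightarrow> real^'n \<Rightarrow> bool" where
  "is_vGNE F X x \<longleftrightarrow> x \<in> X \<and> (\<forall>y\<in>X. inner (F x) (y - x) \<ge> 0)"

definition oriented_connected_graph :: "('p \<times> 'p) set \<Rightarrow> bool" where
  "oriented_connected_graph E \<longleftrightarrow>
     (\<forall>(s,t)\<in>E. s \<noteq> t \<and> (t,s) \<notin> E) \<and> (\<forall>i j. (i, j) \<in> (E \<union> E\<inverse>)\<^sup>*)"

end

theory Submission
  imports Defs
begin

text \<open>The edge row of the inclusion says that \<Lambda> is constant along every edge, hence constant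
on the connected graph. Summing the multiplier rows over the players cancels the edge variable
(every edge enters one player and leaves another), which leaves the coupling constraint. The
primal row is the stacked KKT condition; since \<Omega> is a product and A is block diagonal it splits
into one condition per player. Finally A^T \<lambda> is orthogonal to every feasible direction, so the
normal-cone part of the KKT condition is exactly the variational inequality on X.\<close>

lemma sum_incid_mult_eq_0:
  fixes E :: "('p::finite \<times> 'p) set"
  shows "(\<Sum>i\<in>UNIV. incid_mult E z i) = 0"
proof -
  have "(\<Sum>i\<in>UNIV. \<Sum>e\<in>{e\<in>E. snd e = i}. z e) = sum z E"
    by (rule sum.group) auto
  moreover have "(\<Sum>i\<in>UNIV. \<Sum>e\<in>{e\<in>E. fst e = i}. z e) = sum z E"
    by (rule sum.group) auto
  ultimately show ?thesis
    unfolding incid_mult_def sum_subtractf by simp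
qed

lemma incid_transp_eq_0_imp_eq:
  assumes "\<And>e. e \<in> E \<Longrightarrow> incid_transp \<Lambda> e = 0"
    and "(i, j) \<in> (E \<union> E\<inverse>)\<^sup>*"
  shows "\<Lambda> i = \<Lambda> j"
  using assms(2)
proof (induction rule: rtrancl_induct)
  case base
  then show ?case by simp
next
  case (step j k)
  then show ?case
    using assms(1)[of "(j, k)"] assms(1)[of "(k, j)"] by (auto simp: incid_transp_def)
qed

lemma oriented_connected_graph_consensus:
  assumes "oriented_connected_graph E" "\<And>e. e \<in> E \<Longrightarrow> incid_transp \<Lambda> e = 0"
  shows "\<Lambda> i = \<Lambda> j"
  using assms incid_transp_eq_0_imp_eq unfolding oriented_connected_graph_def by metis

lemma inner_blk_proj_left:
  assumes "w \<in> block_space blk i"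
  shows "inner (blk_proj blk i v) w = inner v w"
proof -
  have "(blk_proj blk i v) $ k * w $ k = v $ k * w $ k" for k
    using assms by (auto simp: blk_proj_def block_space_def)
  then show ?thesis
    unfolding inner_vec_def inner_real_def by (intro sum.cong) auto
qed

lemma blk_proj_normal_cone_Omega_set:
  assumes v: "v \<in> normal_cone (Omega_set blk \<Omega>) x"
    and Omega_sub: "\<Omega> i \<subseteq> block_space blk i"
  shows "blk_proj blk i v \<in> normal_cone (\<Omega> i) (blk_proj blk i x)"
proof -
  have x: "x \<in> Omega_set blk \<Omega>"
    using v by (auto simp: normal_cone_def split: if_splits)
  have "inner (blk_proj blk i v) (y - blk_proj blk i x) \<le> 0" if y: "y \<in> \<Omega> i" for y
  proof -
    have y_blk: "y \<in> block_space blk i"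
      using y Omega_sub by blast
    define x' where "x' = x - blk_proj blk i x + y"
    have "blk_proj blk j x' = (if j = i then y else blk_proj blk j x)" for j
      using y_blk by (auto simp: x'_def blk_proj_def block_space_def vec_eq_iff)
    then have "x' \<in> Omega_set blk \<Omega>"
      using x y by (auto simp: Omega_set_def)
    then have "inner v (y - blk_proj blk i x) \<le> 0"
      using v x by (auto simp: normal_cone_def x'_def)
    moreover have "y - blk_proj blk i x \<in> block_space blk i"
      using y_blk by (simp add: blk_proj_def block_space_def)
    ultimately show ?thesis
      by (simp add: inner_blk_proj_left)
  qed
  moreover have "blk_proj blk i x \<in> \<Omega> i"
    using x by (simp add: Omega_set_def)
  ultimately show ?thesis
    by (simp add: normal_cone_def)
qed

lemma blk_proj_sum_transpose_mult:
  fixes A :: "'p::finite \<Rightarrow> real^'n::finite^'m::finite"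
  assumes A_block: "\<And>i r k. blk k \<noteq> i \<Longrightarrow> A i $ r $ k = 0"
  shows "blk_proj blk i (\<Sum>j\<in>UNIV. transpose (A j) *v l) = transpose (A i) *v l"
proof -
  have off_block: "(transpose (A j) *v l) $ k = 0" if "blk k \<noteq> j" for j k
    using A_block[OF that] by (simp add: matrix_vector_mult_def transpose_def)
  then have "(\<Sum>j\<in>UNIV. (transpose (A j) *v l) $ k) = (transpose (A i) *v l) $ k"
    if "blk k = i" for k
    using that by (subst sum.remove[of _ i]) (auto intro: sum.neutral)
  with off_block show ?thesis
    by (auto simp: vec_eq_iff blk_proj_def sum_component simp del: transpose_matrix_vector)
qed

lemma blk_proj_in_block_space: "blk_proj blk i v \<in> block_space blk i"
  by (simp add: blk_proj_def block_space_def)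

lemma blk_proj_stationary:
  fixes A :: "'p::finite \<Rightarrow> real^'n::finite^'m::finite"
  assumes A_block: "\<And>i r k. blk k \<noteq> i \<Longrightarrow> A i $ r $ k = 0"
    and stationary: "g = - (\<Sum>j\<in>UNIV. transpose (A j) *v l) - v"
  shows "blk_proj blk i g + transpose (A i) *v l + blk_proj blk i v = 0"
proof -
  have "blk_proj blk i g = - blk_proj blk i (\<Sum>j\<in>UNIV. transpose (A j) *v l) - blk_proj blk i v"
    unfolding stationary by (simp add: blk_proj_def vec_eq_iff)
  also have "\<dots> = - (transpose (A i) *v l) - blk_proj blk i v"
    using blk_proj_sum_transpose_mult[OF A_block, where i = i and l = l] by simp
  finally show ?thesis
    by (simp add: algebra_simps eq_neg_iff_add_eq_0)
qed

lemma inner_transpose_mult: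
  fixes A :: "real^'n::finite^'m::finite"
  shows "inner (transpose A *v l) w = inner l (A *v w)"
  by (metis dot_lmul_matrix transpose_transpose vector_transpose_matrix)

lemma inner_sum_transpose_mult:
  fixes A :: "'p::finite \<Rightarrow> real^'n::finite^'m::finite"
  shows "inner (\<Sum>j\<in>UNIV. transpose (A j) *v l) w = inner l (\<Sum>j\<in>UNIV. A j *v w)"
  unfolding inner_sum_left inner_sum_right inner_transpose_mult ..

lemma zero_in_A_plus_B_D:
  assumes "zero_in_A_plus_B blk \<Omega> A b E F (\<Lambda>, z, x)"
  obtains v where "v \<in> normal_cone (Omega_set blk \<Omega>) x"
    and "\<And>i. A i *v x + incid_mult E z i = b i"
    and "\<And>e. e \<in> E \<Longrightarrow> incid_transp \<Lambda> e = 0"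
    and "F x = - (\<Sum>i\<in>UNIV. transpose (A i) *v \<Lambda> i) - v"
proof -
  from assms obtain v where "v \<in> normal_cone (Omega_set blk \<Omega>) x"
    and "\<forall>i. - (A i *v x) - incid_mult E z i + b i = 0"
    and "\<forall>e\<in>E. incid_transp \<Lambda> e + 0 = 0"
    and "(\<Sum>i\<in>UNIV. transpose (A i) *v \<Lambda> i) + v + F x = 0"
    unfolding zero_in_A_plus_B_def opA_def opB_def
    by (auto simp del: transpose_matrix_vector)
  then show ?thesis
    by (intro that[of v]) (auto simp: algebra_simps eq_neg_iff_add_eq_0)
qed

lemma is_vGNE_if_KKT:
  fixes A :: "'p::finite \<Rightarrow> real^'n::finite^'m::finite"
  assumes v: "v \<in> normal_cone (Omega_set blk \<Omega>) x"
    and feasible: "(\<Sum>i\<in>UNIV. A i *v x) = (\<Sum>i\<in>UNIV. b i)"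
    and KKT: "F x = - (\<Sum>i\<in>UNIV. transpose (A i) *v l) - v"
  shows "is_vGNE F (X_set blk \<Omega> A b) x"
  unfolding is_vGNE_def
proof (intro conjI ballI)
  have x: "x \<in> Omega_set blk \<Omega>"
    using v by (auto simp: normal_cone_def split: if_splits)
  then show "x \<in> X_set blk \<Omega> A b"
    using feasible by (simp add: X_set_def)
  fix y
  assume "y \<in> X_set blk \<Omega> A b"
  then have y: "y \<in> Omega_set blk \<Omega>" "(\<Sum>i\<in>UNIV. A i *v y) = (\<Sum>i\<in>UNIV. b i)"
    by (auto simp: X_set_def)
  have "inner (\<Sum>i\<in>UNIV. transpose (A i) *v l) (y - x)
      = inner l ((\<Sum>i\<in>UNIV. A i *v y) - (\<Sum>i\<in>UNIV. A i *v x))"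
    by (simp only: inner_sum_transpose_mult matrix_vector_mult_diff_distrib sum_subtractf)
  then have "inner (\<Sum>i\<in>UNIV. transpose (A i) *v l) (y - x) = 0"
    using y(2) feasible by simp
  then have "inner (F x) (y - x) = - inner v (y - x)"
    by (simp add: KKT inner_diff_left)
  then show "inner (F x) (y - x) \<ge> 0"
    using v x y(1) by (auto simp: normal_cone_def)
qed

theorem theorem1:
  fixes blk :: "'n::finite \<Rightarrow> 'p::finite"
    and \<Omega> :: "'p \<Rightarrow> (real^'n) set"
    and f :: "'p \<Rightarrow> real^'n \<Rightarrow> real"
    and A :: "'p \<Rightarrow> real^'n^'m::finite"
    and b :: "'p \<Rightarrow> real^'m"
    and E :: "('p \<times> 'p) set"
    and \<upsilon> L :: real
    and \<Lambda>s :: "'p \<Rightarrow> real^'m"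
    and zs :: "'p \<times> 'p \<Rightarrow> real^'m"
    and xs :: "real^'n"
  assumes A_block: "\<And>i r k. blk k \<noteq> i \<Longrightarrow> A i $ r $ k = 0"
    and Omega_sub: "\<And>i. \<Omega> i \<subseteq> block_space blk i"
    and Omega_closed: "\<And>i. closed (\<Omega> i)"
    and Omega_convex: "\<And>i. convex (\<Omega> i)"
    and Omega_int: "\<And>i. \<exists>y\<in>\<Omega> i. \<exists>e>0. \<forall>w\<in>block_space blk i. dist w y < e \<longrightarrow> w \<in> \<Omega> i"
    and X_relint: "rel_interior (X_set blk \<Omega> A b) \<noteq> {}"
    and X_slice_relint: "\<And>i x. (\<forall>j. j \<noteq> i \<longrightarrow> blk_proj blk j x \<in> \<Omega> j) \<Longrightarrow>
          rel_interior {y \<in> \<Omega> i. y + (x - blk_proj blk i x) \<in> X_set blk \<Omega> A b} \<noteq> {}"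
    and f_diff: "\<And>i x. f i differentiable (at x)"
    and f_C1: "\<And>i k. continuous_on UNIV (\<lambda>x. frechet_derivative (f i) (at x) (axis k 1))"
    and f_convex: "\<And>i x. convex_on (\<Omega> i) (\<lambda>y. f i (y + (x - blk_proj blk i x)))"
    and strong_mono: "\<upsilon> > 0"
      "\<And>x y. x \<in> Omega_set blk \<Omega> \<Longrightarrow> y \<in> Omega_set blk \<Omega> \<Longrightarrow>
         inner (pseudo_gradient blk f x - pseudo_gradient blk f y) (x - y) \<ge> \<upsilon> * (norm (x - y))\<^sup>2"
    and lipschitz: "L \<ge> 0"
      "\<And>x y. x \<in> Omega_set blk \<Omega> \<Longrightarrow> y \<in> Omega_set blk \<Omega> \<Longrightarrow>
         dist (pseudo_gradient blk f x) (pseudo_gradient blk f y) \<le> L * dist x y"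
    and graph: "oriented_connected_graph E"
    and zero: "zero_in_A_plus_B blk \<Omega> A b E (pseudo_gradient blk f) (\<Lambda>s, zs, xs)"
  shows "\<exists>lam :: real^'m.
           (\<forall>i. \<Lambda>s i = lam)
         \<and> (\<forall>i. 0 \<in> {blk_proj blk i (pseudo_gradient blk f xs) + transpose (A i) *v lam + v | v.
                     v \<in> block_space blk i \<inter> normal_cone (\<Omega> i) (blk_proj blk i xs)})
         \<and> (\<Sum>i\<in>UNIV. A i *v xs) = (\<Sum>i\<in>UNIV. b i)
         \<and> is_vGNE (pseudo_gradient blk f) (X_set blk \<Omega> A b) xs"
proof -
  let ?F = "pseudo_gradient blk f"
  obtain v where v: "v \<in> normal_cone (Omega_set blk \<Omega>) xs"
    and primal: "\<And>i. A i *v xs + incid_mult E zs i = b i"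
    and edges: "\<And>e. e \<in> E \<Longrightarrow> incid_transp \<Lambda>s e = 0"
    and stationary: "?F xs = - (\<Sum>i\<in>UNIV. transpose (A i) *v \<Lambda>s i) - v"
    by (rule zero_in_A_plus_B_D[OF zero]) (rule that)
  define lam where "lam = \<Lambda>s undefined"
  have consensus: "\<Lambda>s i = lam" for i
    unfolding lam_def using graph edges by (rule oriented_connected_graph_consensus)
  have feasible: "(\<Sum>i\<in>UNIV. A i *v xs) = (\<Sum>i\<in>UNIV. b i)"
    using sum_incid_mult_eq_0[of E zs] by (simp flip: primal add: sum.distrib)
  have KKT: "?F xs = - (\<Sum>i\<in>UNIV. transpose (A i) *v lam) - v"
    using stationary consensus by simp
  have "blk_proj blk i (?F xs) + transpose (A i) *v lam + blk_proj blk i v = 0" for i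
    using A_block KKT by (rule blk_proj_stationary)
  moreover have "blk_proj blk i v \<in> block_space blk i \<inter> normal_cone (\<Omega> i) (blk_proj blk i xs)"
    for i
    by (intro IntI blk_proj_in_block_space blk_proj_normal_cone_Omega_set[OF v Omega_sub])
  moreover have "is_vGNE ?F (X_set blk \<Omega> A b) xs"
    using v feasible KKT by (rule is_vGNE_if_KKT)
  ultimately show ?thesis
    using consensus feasible by (intro exI[of _ lam]) (metis (mono_tags, lifting) mem_Collect_eq)
qed

end
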